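(* For every $x>0$, $$\int_0^\infty\frac{\sin^2t}{(t+x)^2}\,dt<\frac{1}{2x}\qquad\text{and}\qquad\int_0^\infty\frac{|\sin t|}{(t+x)^2}\,dt<\frac{2}{\pi x}.$$ *)

theory Defs
  imports "HOL-Analysis.Analysis"
begin

end

theory Submission
  imports Defs
begin

text \<open>
  Both integrands are \<open>f t / (t + x)^2\<close> with \<open>f\<close> \<open>\<pi>\<close>-periodic of mean \<open>m\<close>
  (\<open>m = 1/2\<close> for \<open>sin\<^sup>2\<close>, \<open>m = 2/\<pi>\<close> for \<open>|sin|\<close>). Let \<open>F\<close> be an antiderivative of
  \<open>f - m\<close> on one period and \<open>P\<close> one of \<open>F\<close>, both vanishing at the ends of the period.
  Integrating by parts twice over \<open>[a, a + \<pi>]\<close> gives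
  \<open>\<integral> f/(t+x)\<^sup>2 = m (1/(a+x) - 1/(a+\<pi>+x)) + 6 \<integral> P(t-a)/(t+x)\<^sup>4\<close>.
  In both cases \<open>P \<le> 0\<close>, so the periods telescope to a total of at most \<open>m/x\<close>, and the
  first period alone already falls short by \<open>6 \<integral>\<^sub>0\<^sup>\<pi> P / (\<pi>+x)\<^sup>4 < 0\<close>.
\<close>

lemma interval_integral_mono:
  fixes f g :: "real \<Rightarrow> real"
  assumes "a \<le> b"
    and "\<And>t. a \<le> t \<Longrightarrow> t \<le> b \<Longrightarrow> isCont f t" "\<And>t. a \<le> t \<Longrightarrow> t \<le> b \<Longrightarrow> isCont g t"
    and "\<And>t. a \<le> t \<Longrightarrow> t \<le> b \<Longrightarrow> f t \<le> g t"
  shows "(LBINT t=a..b. f t) \<le> (LBINT t=a..b. g t)"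
  unfolding interval_integral_Icc[OF \<open>a \<le> b\<close>]
  using assms by (intro set_integral_mono borel_integrable_atLeastAtMost' continuous_at_imp_continuous_on) auto

lemma DERIV_divide_shifted_power:
  fixes g :: "real \<Rightarrow> real"
  assumes "(g has_real_derivative g') (at t)" "t + x \<noteq> 0"
  shows "((\<lambda>t. g t / (t + x)^n) has_real_derivative g' / (t + x)^n - n * g t / (t + x)^Suc n) (at t)"
proof (cases n)
  case 0
  then show ?thesis using assms(1) by simp
next
  case (Suc k)
  have "((\<lambda>t. (t + x)^Suc k) has_real_derivative real (Suc k) * (t + x)^k) (at t)"
    by (rule derivative_eq_intros refl | simp)+
  from DERIV_quotient[OF assms(1) this] assms(2)
  have "((\<lambda>t. g t / (t + x)^Suc k) has_real_derivative
      (g' * (t + x)^Suc k - real (Suc k) * (t + x)^k * g t) / ((t + x)^Suc k)^Suc (Suc 0)) (at t)"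
    by simp
  moreover have "(g' * y^Suc k - real (Suc k) * y^k * g t) / (y^Suc k)^Suc (Suc 0)
      = g' / y^Suc k - real (Suc k) * g t / y^Suc (Suc k)" if "y \<noteq> 0" for y :: real
    using that by (simp add: field_simps)
  ultimately show ?thesis
    unfolding Suc using assms(2) by simp
qed

lemma set_integrable_inverse_square_shift:
  fixes x :: real
  assumes "x > 0"
  shows "set_integrable lborel {0..} (\<lambda>t. 1 / (t + x)^2)"
proof -
  let ?F = "\<lambda>t::real. - 1 / (t + x)"
  have "set_integrable lborel (einterval 0 \<infinity>) (\<lambda>t. 1 / (t + x)^2)"
  proof (rule interval_integral_FTC_nonneg(1)[where F = ?F and A = "- 1 / x" and B = 0])
    show "(?F has_real_derivative 1 / (t + x)^2) (at t)" if "0 < ereal t" for t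
      using that assms by (auto intro!: derivative_eq_intros simp: power2_eq_square field_simps)
    show "isCont (\<lambda>t. 1 / (t + x)^2) t" if "0 < ereal t" for t
      using that assms by (auto intro!: continuous_intros)
    show "((?F \<circ> real_of_ereal) \<longlongrightarrow> - 1 / x) (at_right 0)"
      using assms by (auto simp: zero_ereal_def ereal_tendsto_simps intro!: tendsto_eq_intros)
    have "filterlim (\<lambda>t. t + x) at_top at_top"
      by (rule filterlim_tendsto_add_at_top[OF tendsto_const filterlim_ident, simplified add.commute])
    then show "((?F \<circ> real_of_ereal) \<longlongrightarrow> 0) (at_left \<infinity>)"
      unfolding ereal_tendsto_simps by (intro tendsto_divide_0[OF tendsto_const]) (simp add: filterlim_at_top_imp_at_infinity)
  qed auto
  then have "set_integrable lborel {0<..} (\<lambda>t. 1 / (t + x)^2)"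
    by (simp add: zero_ereal_def)
  then show ?thesis
    by (subst set_integrable_discrete_difference[where X = "{0}"]) auto
qed

lemma set_integral_le_of_interval_integrals_le:
  fixes g :: "real \<Rightarrow> real" and b :: "nat \<Rightarrow> real"
  assumes "set_integrable lborel {0..} g" and "filterlim b at_top sequentially"
    and "\<And>N. (LBINT t=0..b N. g t) \<le> B"
  shows "(LINT t:{0..}|lborel. g t) \<le> B"
proof (rule tendsto_upperbound)
  show "((\<lambda>N. LINT t:{0..b N}|lborel. g t) \<longlongrightarrow> (LINT t:{0..}|lborel. g t)) sequentially"
    by (rule filterlim_compose[OF tendsto_set_lebesgue_integral_at_top assms(2)]) (use assms(1) in auto)
  have "eventually (\<lambda>N. b N \<ge> 0) sequentially"
    using assms(2) by (simp add: filterlim_at_top)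
  then show "eventually (\<lambda>N. (LINT t:{0..b N}|lborel. g t) \<le> B) sequentially"
    by eventually_elim (use assms(3) in \<open>simp add: interval_integral_Icc zero_ereal_def flip: interval_integral_Icc\<close>)
qed simp

text \<open>\<open>F(0) = F(p) = 0\<close> forces \<open>m\<close> to be the mean of \<open>\<phi>\<close> over \<open>[0, p]\<close>.\<close>

locale mean_profile =
  fixes p m :: real and \<phi> F P :: "real \<Rightarrow> real"
  assumes period_pos: "p > 0"
    and F_deriv: "\<And>u. (F has_real_derivative \<phi> u - m) (at u)"
    and P_deriv: "\<And>u. (P has_real_derivative F u) (at u)"
    and profile_cont: "\<And>u. isCont \<phi> u"
    and F_endpoints: "F 0 = 0" "F p = 0"
    and P_endpoints: "P 0 = 0" "P p = 0"
    and P_nonpos: "\<And>u. 0 \<le> u \<Longrightarrow> u \<le> p \<Longrightarrow> P u \<le> 0"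
begin

lemma P_cont: "isCont P u"
  using P_deriv DERIV_isCont by blast

lemma period_integral_eq:
  assumes "a + x > 0"
  shows "(LBINT t=a..a+p. \<phi> (t - a) / (t + x)^2)
       = m * (1 / (a + x) - 1 / (a + p + x)) + 6 * (LBINT t=a..a+p. P (t - a) / (t + x)^4)"
proof -
  define H where "H t = - m / (t + x) + F (t - a) / (t + x)^2 + 2 * P (t - a) / (t + x)^3" for t
  have pos: "t + x > 0" if "a \<le> t" for t
    using that assms by linarith
  have H_deriv: "(H has_real_derivative \<phi> (t - a) / (t + x)^2 - 6 * P (t - a) / (t + x)^4) (at t)"
    if "a \<le> t" for t
  proof -
    have tx: "t + x \<noteq> 0" using pos[OF that] by simp
    have shift: "((\<lambda>t. t - a) has_real_derivative 1) (at t)"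
      by (auto intro!: derivative_eq_intros)
    have "((\<lambda>t. - m / (t + x)) has_real_derivative m / (t + x)^2) (at t)"
      using DERIV_divide_shifted_power[OF DERIV_const tx, of "- m" 1] by (simp add: power2_eq_square)
    moreover have "((\<lambda>t. F (t - a) / (t + x)^2) has_real_derivative
        (\<phi> (t - a) - m) / (t + x)^2 - 2 * F (t - a) / (t + x)^3) (at t)"
      using DERIV_divide_shifted_power[OF DERIV_chain2[OF F_deriv shift] tx, of 2] by simp
    moreover have "((\<lambda>t. 2 * P (t - a) / (t + x)^3) has_real_derivative
        2 * F (t - a) / (t + x)^3 - 6 * P (t - a) / (t + x)^4) (at t)"
      using DERIV_divide_shifted_power[OF DERIV_cmult[OF DERIV_chain2[OF P_deriv shift]] tx, of 2 3] by simp
    ultimately have "(H has_real_derivative m / (t + x)^2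
      + ((\<phi> (t - a) - m) / (t + x)^2 - 2 * F (t - a) / (t + x)^3)
      + (2 * F (t - a) / (t + x)^3 - 6 * P (t - a) / (t + x)^4)) (at t)"
      unfolding H_def by (intro DERIV_add)
    moreover have "m / (t + x)^2
      + ((\<phi> (t - a) - m) / (t + x)^2 - 2 * F (t - a) / (t + x)^3)
      + (2 * F (t - a) / (t + x)^3 - 6 * P (t - a) / (t + x)^4)
      = \<phi> (t - a) / (t + x)^2 - 6 * P (t - a) / (t + x)^4"
      by (simp add: diff_divide_distrib)
    ultimately show ?thesis by simp
  qed
  have cont: "isCont (\<lambda>t. \<phi> (t - a) / (t + x)^2) t" "isCont (\<lambda>t. 6 * P (t - a) / (t + x)^4) t"
    "isCont (\<lambda>t. \<phi> (t - a) / (t + x)^2 - 6 * P (t - a) / (t + x)^4) t" if "a \<le> t" for t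
    using pos[OF that]
    by (auto intro!: continuous_intros isCont_o2[OF _ profile_cont] isCont_o2[OF _ P_cont])
  have "(LBINT t=a..a+p. \<phi> (t - a) / (t + x)^2 - 6 * P (t - a) / (t + x)^4) = H (a + p) - H a"
  proof (rule interval_integral_FTC_finite)
    show "continuous_on {min a (a + p)..max a (a + p)} (\<lambda>t. \<phi> (t - a) / (t + x)^2 - 6 * P (t - a) / (t + x)^4)"
      using cont(3) period_pos by (intro continuous_at_imp_continuous_on) auto
    show "(H has_vector_derivative \<phi> (t - a) / (t + x)^2 - 6 * P (t - a) / (t + x)^4)
        (at t within {min a (a + p)..max a (a + p)})" if "min a (a + p) \<le> t" for t
      using H_deriv[of t] that period_pos
      by (auto simp: has_real_derivative_iff_has_vector_derivative[symmetric] intro: has_field_derivative_at_within)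
  qed
  also have "H (a + p) - H a = m * (1 / (a + x) - 1 / (a + p + x))"
    unfolding H_def using F_endpoints P_endpoints by (simp add: algebra_simps)
  moreover have "(LBINT t=a..a+p. \<phi> (t - a) / (t + x)^2 - 6 * P (t - a) / (t + x)^4)
      = (LBINT t=a..a+p. \<phi> (t - a) / (t + x)^2) - 6 * (LBINT t=a..a+p. P (t - a) / (t + x)^4)"
    using cont period_pos interval_lebesgue_integral_mult_right[of lborel a "a + p" 6 "\<lambda>t. P (t - a) / (t + x)^4"]
    by (subst interval_lebesgue_integral_diff) (auto intro!: interval_integrable_isCont)
  ultimately show ?thesis by simp
qed

lemma period_integral_le:
  assumes "a + x > 0"
  shows "(LBINT t=a..a+p. \<phi> (t - a) / (t + x)^2) \<le> m * (1 / (a + x) - 1 / (a + p + x))"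
proof -
  have "(LBINT t=a..a+p. P (t - a) / (t + x)^4) \<le> (LBINT t=a..a+p. 0)"
  proof (rule interval_integral_mono)
    show "P (t - a) / (t + x)^4 \<le> 0" if "a \<le> t" "t \<le> a + p" for t
      using P_nonpos[of "t - a"] that by (simp add: divide_nonpos_nonneg)
    show "isCont (\<lambda>t. P (t - a) / (t + x)^4) t" if "a \<le> t" for t
      using that assms by (intro continuous_intros isCont_o2[OF _ P_cont]) auto
  qed (use period_pos in auto)
  then show ?thesis
    using period_integral_eq[OF assms] by simp
qed

lemma first_period_integral_le:
  assumes "x > 0" and R_deriv: "\<And>u. (R has_real_derivative P u) (at u)"
  shows "(LBINT t=0..p. \<phi> t / (t + x)^2) \<le> m * (1 / x - 1 / (p + x)) + 6 * (R p - R 0) / (p + x)^4"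
proof -
  have "(LBINT t=0..p. P t / (t + x)^4) \<le> (LBINT t=0..p. P t / (p + x)^4)"
    unfolding zero_ereal_def
  proof (rule interval_integral_mono)
    show "P t / (t + x)^4 \<le> P t / (p + x)^4" if "0 \<le> t" "t \<le> p" for t
      using that assms(1) P_nonpos[OF that] by (intro divide_left_mono_neg power_mono) auto
    show "isCont (\<lambda>t. P t / (t + x)^4) t" "isCont (\<lambda>t. P t / (p + x)^4) t" if "0 \<le> t" for t
      using that assms(1) period_pos by (auto intro!: continuous_intros P_cont)
  qed (use period_pos in auto)
  also have "(LBINT t=0..p. P t) = R p - R 0"
    using R_deriv P_cont unfolding zero_ereal_def
    by (intro interval_integral_FTC_finite continuous_at_imp_continuous_on)
      (auto simp: has_real_derivative_iff_has_vector_derivative[symmetric] intro: has_field_derivative_at_within)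
  then have "(LBINT t=0..p. P t / (p + x)^4) = (R p - R 0) / (p + x)^4"
    by simp
  finally have "6 * (LBINT t=0..p. P t / (t + x)^4) \<le> 6 * ((R p - R 0) / (p + x)^4)"
    by (rule mult_left_mono) simp
  then show ?thesis
    using period_integral_eq[of 0 x] assms(1) by (simp add: zero_ereal_def)
qed

end

locale periodic_extension = mean_profile +
  fixes f :: "real \<Rightarrow> real"
  assumes f_cont: "isCont f t"
    and f_on_period: "real k * p \<le> t \<Longrightarrow> t \<le> real k * p + p \<Longrightarrow> f t = \<phi> (t - real k * p)"
begin

lemma period_integral_eq_profile:
  "(LBINT t=real k * p..real k * p + p. f t / (t + x)^2)
     = (LBINT t=real k * p..real k * p + p. \<phi> (t - real k * p) / (t + x)^2)"
  using period_pos by (intro interval_integral_cong) (auto simp: einterval_iff f_on_period)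

lemma partial_integral_le:
  assumes "x > 0" and R_deriv: "\<And>u. (R has_real_derivative P u) (at u)"
  shows "(LBINT t=0..real (Suc N) * p. f t / (t + x)^2)
       \<le> m * (1 / x - 1 / (real (Suc N) * p + x)) + 6 * (R p - R 0) / (p + x)^4"
proof (induction N)
  case 0
  show ?case
    using period_integral_eq_profile[of 0 x] first_period_integral_le[OF assms]
    by (simp add: zero_ereal_def)
next
  case (Suc N)
  let ?a = "real (Suc N) * p"
  have "interval_lebesgue_integrable lborel 0 (?a + p) (\<lambda>t. f t / (t + x)^2)"
    using period_pos assms(1) unfolding zero_ereal_def
    by (intro interval_integrable_isCont) (auto intro!: continuous_intros f_cont)
  then have "(LBINT t=0..?a + p. f t / (t + x)^2)
      = (LBINT t=0..?a. f t / (t + x)^2) + (LBINT t=?a..?a + p. f t / (t + x)^2)"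
    using interval_integral_sum[of 0 ?a "?a + p" "\<lambda>t. f t / (t + x)^2"] period_pos
    by (simp add: zero_ereal_def)
  also have "\<dots> \<le> m * (1 / x - 1 / (?a + x)) + 6 * (R p - R 0) / (p + x)^4
      + m * (1 / (?a + x) - 1 / (?a + p + x))"
  proof -
    have "?a + x > 0"
      using period_pos assms(1) by (intro add_pos_pos mult_pos_pos) auto
    then show ?thesis
      using Suc.IH period_integral_le[of ?a x] period_integral_eq_profile[of "Suc N" x]
      by (intro add_mono) simp_all
  qed
  finally show ?case
    by (simp add: algebra_simps)
qed

lemma set_integral_less:
  assumes "x > 0" and "m \<ge> 0" and "\<And>t. \<bar>f t\<bar> \<le> C"
    and R_deriv: "\<And>u. (R has_real_derivative P u) (at u)" and "R p < R 0"
  shows "set_integrable lborel {0..} (\<lambda>t. f t / (t + x)^2)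
       \<and> (LINT t:{0..}|lborel. f t / (t + x)^2) < m / x"
proof
  have "f \<in> borel_measurable borel"
    using f_cont by (intro borel_measurable_continuous_onI continuous_at_imp_continuous_on) auto
  then have measurable: "set_borel_measurable lborel {0..} (\<lambda>t. f t / (t + x)^2)"
    unfolding set_borel_measurable_def by measurable
  have bound: "norm (f t / (t + x)^2) \<le> norm (C * (1 / (t + x)^2))" if "t \<ge> 0" for t
  proof -
    have "\<bar>f t\<bar> \<le> \<bar>C\<bar>"
      using assms(3)[of t] by linarith
    then show ?thesis
      using that assms(1) by (simp add: abs_divide divide_right_mono)
  qed
  have "set_integrable lborel {0..} (\<lambda>t. C * (1 / (t + x)^2))"
    by (intro set_integrable_mult_right set_integrable_inverse_square_shift assms(1))
  then show integrable: "set_integrable lborel {0..} (\<lambda>t. f t / (t + x)^2)"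
    by (rule set_integrable_bound[OF _ measurable]) (use bound in auto)
  have "(LINT t:{0..}|lborel. f t / (t + x)^2) \<le> m / x + 6 * (R p - R 0) / (p + x)^4"
  proof (rule set_integral_le_of_interval_integrals_le[OF integrable])
    have "filterlim (\<lambda>N. real (Suc N)) at_top sequentially"
      by (subst filterlim_sequentially_Suc) (rule filterlim_real_sequentially)
    then show "filterlim (\<lambda>N. real (Suc N) * p) at_top sequentially"
      by (rule filterlim_at_top_mult_tendsto_pos[OF tendsto_const period_pos])
    show "(LBINT t=0..real (Suc N) * p. f t / (t + x)^2) \<le> m / x + 6 * (R p - R 0) / (p + x)^4" for N
    proof -
      have "0 \<le> m / (real (Suc N) * p + x)"
        using assms(1,2) period_pos by simp
      then show ?thesis
        using partial_integral_le[OF assms(1) R_deriv, of N] by (simp add: right_diff_distrib)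
    qed
  qed
  moreover have "6 * (R p - R 0) / (p + x)^4 < 0"
    using assms(1,5) period_pos by (simp add: divide_neg_pos)
  ultimately show "(LINT t:{0..}|lborel. f t / (t + x)^2) < m / x"
    by linarith
qed

end

lemma cos_ge_taylor2:
  fixes u :: real
  assumes "u \<ge> 0"
  shows "1 - u^2 / 2 \<le> cos u"
proof -
  have "(\<lambda>u. cos u - 1 + u^2 / 2) 0 \<le> (\<lambda>u. cos u - 1 + u^2 / 2) u"
  proof (rule DERIV_nonneg_imp_nondecreasing[OF assms])
    fix v :: real
    assume "0 \<le> v"
    then show "\<exists>y. ((\<lambda>u. cos u - 1 + u^2 / 2) has_real_derivative y) (at v) \<and> 0 \<le> y"
      by (intro exI[of _ "v - sin v"] conjI) (auto intro!: derivative_eq_intros simp: sin_x_le_x)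
  qed
  then show ?thesis by simp
qed

lemma sin_ge_taylor3:
  fixes u :: real
  assumes "u \<ge> 0"
  shows "u - u^3 / 6 \<le> sin u"
proof -
  have "(\<lambda>u. sin u - u + u^3 / 6) 0 \<le> (\<lambda>u. sin u - u + u^3 / 6) u"
  proof (rule DERIV_nonneg_imp_nondecreasing[OF assms])
    fix v :: real
    assume "0 \<le> v"
    then show "\<exists>y. ((\<lambda>u. sin u - u + u^3 / 6) has_real_derivative y) (at v) \<and> 0 \<le> y"
      using cos_ge_taylor2[of v]
      by (intro exI[of _ "cos v - 1 + v^2 / 2"] conjI) (auto intro!: derivative_eq_intros)
  qed
  then show ?thesis by simp
qed

lemma pi_squared_less_12: "pi^2 < 12"
proof -
  have "pi \<le> 3.2"
    using pi_approx by simp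
  then have "pi * pi \<le> 3.2 * 3.2"
    by (intro mult_mono) auto
  then show ?thesis
    by (simp add: power2_eq_square)
qed

lemma sin_ge_parabola:
  fixes u :: real
  assumes "0 \<le> u" "u \<le> pi"
  shows "u - u^2 / pi \<le> sin u"
proof -
  have near_zero: "v - v^2 / pi \<le> sin v" if "0 \<le> v" "v \<le> 6 / pi" for v
  proof -
    have "v * pi \<le> 6"
      using that(2) pi_gt_zero by (simp add: field_simps)
    then have "v^2 * (v * pi) \<le> v^2 * 6"
      by (intro mult_left_mono) auto
    then have "v^3 / 6 \<le> v^2 / pi"
      using pi_gt_zero by (simp add: field_simps power2_eq_square power3_eq_cube)
    then show ?thesis
      using sin_ge_taylor3[OF that(1)] by linarith
  qed
  have "pi / 2 \<le> 6 / pi"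
    using pi_squared_less_12 pi_gt_zero by (simp add: field_simps power2_eq_square)
  then consider "u \<le> 6 / pi" | "pi - u \<le> 6 / pi"
    by linarith
  then show ?thesis
  proof cases
    case 1
    then show ?thesis using near_zero assms by blast
  next
    case 2
    \<comment> \<open>both sides are symmetric about \<open>\<pi>/2\<close>\<close>
    have "(pi - u) - (pi - u)^2 / pi = u - u^2 / pi"
      using pi_gt_zero by (simp add: field_simps power2_eq_square)
    then show ?thesis
      using near_zero[of "pi - u"] 2 assms by (simp add: sin_diff)
  qed
qed

lemma sin_squared_periodic_extension:
  "periodic_extension pi (1/2) (\<lambda>u. sin u ^ 2) (\<lambda>u. - sin (2 * u) / 4) (\<lambda>u. (cos (2 * u) - 1) / 8)
     (\<lambda>u. sin u ^ 2)"
proof unfold_locales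
  show "((\<lambda>u. - sin (2 * u) / 4) has_real_derivative sin u ^ 2 - 1/2) (at u)" for u
  proof -
    have "((\<lambda>u. - sin (2 * u) / 4) has_real_derivative - cos (2 * u) / 2) (at u)"
      by (auto intro!: derivative_eq_intros)
    then show ?thesis
      by (simp add: cos_double_sin diff_divide_distrib)
  qed
  show "((\<lambda>u. (cos (2 * u) - 1) / 8) has_real_derivative - sin (2 * u) / 4) (at u)" for u
    by (auto intro!: derivative_eq_intros)
  show "sin t ^ 2 = sin (t - real k * pi) ^ 2" for t k
    by (simp add: sin_diff power_mult_distrib flip: power_mult)
qed (auto intro!: continuous_intros)

lemma abs_sin_periodic_extension:
  "periodic_extension pi (2 / pi) sin (\<lambda>u. 1 - cos u - 2 * u / pi) (\<lambda>u. u - sin u - u^2 / pi)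
     (\<lambda>u. \<bar>sin u\<bar>)"
proof unfold_locales
  show "((\<lambda>u. 1 - cos u - 2 * u / pi) has_real_derivative sin u - 2 / pi) (at u)" for u
    by (auto intro!: derivative_eq_intros)
  show "((\<lambda>u. u - sin u - u^2 / pi) has_real_derivative 1 - cos u - 2 * u / pi) (at u)" for u
    by (auto intro!: derivative_eq_intros)
  show "u - sin u - u^2 / pi \<le> 0" if "0 \<le> u" "u \<le> pi" for u
    using sin_ge_parabola[OF that] by simp
  show "\<bar>sin t\<bar> = sin (t - real k * pi)" if "real k * pi \<le> t" "t \<le> real k * pi + pi" for t k
  proof -
    have "0 \<le> sin (t - real k * pi)"
      using that by (intro sin_ge_zero) auto
    moreover have "\<bar>sin t\<bar> = \<bar>sin (t - real k * pi)\<bar>"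
      by (simp add: sin_diff abs_mult)
    ultimately show ?thesis
      by simp
  qed
qed (auto intro!: continuous_intros simp: power2_eq_square)

lemma integral_sin_squared_less:
  fixes x :: real
  assumes "x > 0"
  shows "set_integrable lborel {0..} (\<lambda>t. sin t ^ 2 / (t + x)^2)
       \<and> (LINT t:{0..}|lborel. sin t ^ 2 / (t + x)^2) < 1 / (2 * x)"
proof -
  interpret periodic_extension pi "1/2" "\<lambda>u. sin u ^ 2" "\<lambda>u. - sin (2 * u) / 4"
    "\<lambda>u. (cos (2 * u) - 1) / 8" "\<lambda>u. sin u ^ 2"
    by (rule sin_squared_periodic_extension)
  have "((\<lambda>u. sin (2 * u) / 16 - u / 8) has_real_derivative (cos (2 * u) - 1) / 8) (at u)" for u
    by (auto intro!: derivative_eq_intros simp: field_simps)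
  from set_integral_less[OF assms _ _ this, of 1] show ?thesis
    by (simp add: abs_square_le_1)
qed

lemma integral_abs_sin_less:
  fixes x :: real
  assumes "x > 0"
  shows "set_integrable lborel {0..} (\<lambda>t. \<bar>sin t\<bar> / (t + x)^2)
       \<and> (LINT t:{0..}|lborel. \<bar>sin t\<bar> / (t + x)^2) < 2 / (pi * x)"
proof -
  interpret periodic_extension pi "2 / pi" sin "\<lambda>u. 1 - cos u - 2 * u / pi"
    "\<lambda>u. u - sin u - u^2 / pi" "\<lambda>u. \<bar>sin u\<bar>"
    by (rule abs_sin_periodic_extension)
  let ?R = "\<lambda>u. u^2 / 2 + cos u - u^3 / (3 * pi)"
  have "(?R has_real_derivative u - sin u - u^2 / pi) (at u)" for u
    by (auto intro!: derivative_eq_intros simp: field_simps power2_eq_square)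
  moreover have "?R pi < ?R 0"
    using pi_squared_less_12 by (simp add: power2_eq_square power3_eq_cube)
  ultimately show ?thesis
    using set_integral_less[OF assms, of 1 ?R] by simp
qed

theorem mainTheorem7:
  fixes x :: real
  assumes "x > 0"
  shows "set_integrable lborel {0..} (\<lambda>t. sin t ^ 2 / (t + x) ^ 2)
       \<and> (LINT t:{0..}|lborel. sin t ^ 2 / (t + x) ^ 2) < 1 / (2 * x)
       \<and> set_integrable lborel {0..} (\<lambda>t. \<bar>sin t\<bar> / (t + x) ^ 2)
       \<and> (LINT t:{0..}|lborel. \<bar>sin t\<bar> / (t + x) ^ 2) < 2 / (pi * x)"
  using integral_sin_squared_less[OF assms] integral_abs_sin_less[OF assms] by blast

end
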